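(* Let $M$ be a finite abelian group of even order and exponent greater than $2$, written as $M=C_{2i_1}\times\cdots\times C_{2i_s}\times M_1$ with $M_1$ of odd order, $s\geq 1$, and $i_j\geq 1$ for all $j$. Then $|\mathcal{H}_M|=4^s$.
   Context: $C_n$ denotes the cyclic group of order $n$. Let $K=\{1,a,b,c\}$ be the Klein four-group. Set $L_M=K\times M$ with the operation $(A,x)*(B,y)=(AB,xy)$ if $B=1$, and $(A,x)*(B,y)=(AB,x^{-1}y)$ if $B\neq 1$. Write $(1,M)=\{(1,x):x\in M\}$. Let $\mathcal{H}_M$ be the set of subloops $H$ of $L_M$ that are isomorphic to $K$ and satisfy $|H\cap(1,M)|=1$. *)

theory Defs
  imports "HOL-Algebra.Algebra"
begin

definition grp_exponent :: "('a, 'b) monoid_scheme \<Rightarrow> nat" where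
  "grp_exponent G = (LEAST n. 0 < n \<and> (\<forall>x\<in>carrier G. x [^]\<^bsub>G\<^esub> n = \<one>\<^bsub>G\<^esub>))"

datatype klein = K1 | Ka | Kb | Kc

fun kmul :: "klein \<Rightarrow> klein \<Rightarrow> klein" where
  "kmul K1 y = y"
| "kmul x K1 = x"
| "kmul Ka Ka = K1" | "kmul Ka Kb = Kc" | "kmul Ka Kc = Kb"
| "kmul Kb Ka = Kc" | "kmul Kb Kb = K1" | "kmul Kb Kc = Ka"
| "kmul Kc Ka = Kb" | "kmul Kc Kb = Ka" | "kmul Kc Kc = K1"

definition Lcarrier :: "('a, 'b) monoid_scheme \<Rightarrow> (klein \<times> 'a) set" where
  "Lcarrier M = UNIV \<times> carrier M"

definition Lmul :: "('a, 'b) monoid_scheme \<Rightarrow> klein \<times> 'a \<Rightarrow> klein \<times> 'a \<Rightarrow> klein \<times> 'a" where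
  "Lmul M p q = (kmul (fst p) (fst q),
      (if fst q = K1 then snd p \<otimes>\<^bsub>M\<^esub> snd q else inv\<^bsub>M\<^esub> (snd p) \<otimes>\<^bsub>M\<^esub> snd q))"

definition Lone :: "('a, 'b) monoid_scheme \<Rightarrow> klein \<times> 'a" where
  "Lone M = (K1, \<one>\<^bsub>M\<^esub>)"

definition is_subloop :: "('a, 'b) monoid_scheme \<Rightarrow> (klein \<times> 'a) set \<Rightarrow> bool" where
  "is_subloop M H \<longleftrightarrow> H \<subseteq> Lcarrier M \<and> Lone M \<in> H
     \<and> (\<forall>p\<in>H. \<forall>q\<in>H. Lmul M p q \<in> H)
     \<and> (\<forall>p\<in>H. \<forall>q\<in>H. (\<exists>!x. x \<in> H \<and> Lmul M p x = q) \<and> (\<exists>!y. y \<in> H \<and> Lmul M y p = q))"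

definition iso_to_klein :: "('a, 'b) monoid_scheme \<Rightarrow> (klein \<times> 'a) set \<Rightarrow> bool" where
  "iso_to_klein M H \<longleftrightarrow> (\<exists>f. bij_betw f (UNIV :: klein set) H
       \<and> (\<forall>u v. f (kmul u v) = Lmul M (f u) (f v)))"

definition calH :: "('a, 'b) monoid_scheme \<Rightarrow> (klein \<times> 'a) set set" where
  "calH M = {H. is_subloop M H \<and> iso_to_klein M H
       \<and> card (H \<inter> ({K1} \<times> carrier M)) = 1}"

end

theory Submission
  imports Defs
begin

(* Let \<Omega> = {x. x^2 = 1} be the 2-torsion of the abelian group M.  If H is in \<H>_M, two of its
   elements (k,u), (k,v) with k \<noteq> 1 multiply to (1, u^-1 v), so H has exactly one element over each
   of a, b, c, say (a,x), (b,y), (c,z).  Closure gives z = x^-1 y = y^-1 x and x = y^-1 z, which in an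
   abelian group forces x, y \<in> \<Omega> and z = xy; conversely each such quadruple lies in \<H>_M.  Hence
   |\<H>_M| = |\<Omega>|^2, and \<Omega> of C_{2i_1} \<times> ... \<times> C_{2i_s} \<times> M_1 is {0, i_1} \<times> ... \<times> {0, i_s} \<times> {1}. *)

definition two_torsion :: "('a, 'b) monoid_scheme \<Rightarrow> 'a set" where
  "two_torsion G = {x \<in> carrier G. x \<otimes>\<^bsub>G\<^esub> x = \<one>\<^bsub>G\<^esub>}"

lemma two_torsion_iso:
  assumes h: "h \<in> iso G H" and G: "group G" and H: "group H"
  shows "bij_betw h (two_torsion G) (two_torsion H)"
proof (rule bij_betw_subset)
  have hom: "h \<in> hom G H" and bij: "bij_betw h (carrier G) (carrier H)"
    using h by (auto simp: iso_def)
  show "bij_betw h (carrier G) (carrier H)" using bij .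
  show "two_torsion G \<subseteq> carrier G" by (auto simp: two_torsion_def)
  have h_one: "h \<one>\<^bsub>G\<^esub> = \<one>\<^bsub>H\<^esub>" using hom_one[OF hom G H] .
  show "h ` two_torsion G = two_torsion H"
  proof
    show "h ` two_torsion G \<subseteq> two_torsion H"
      using hom h_one by (auto simp: two_torsion_def hom_mult[symmetric] hom_def)
    show "two_torsion H \<subseteq> h ` two_torsion G"
    proof
      fix y assume y: "y \<in> two_torsion H"
      then obtain x where x: "x \<in> carrier G" "y = h x"
        using bij by (auto simp: two_torsion_def bij_betw_def)
      have "h (x \<otimes>\<^bsub>G\<^esub> x) = h \<one>\<^bsub>G\<^esub>"
        using y x h_one hom_mult[OF hom x(1) x(1)] by (simp add: two_torsion_def)
      then have "x \<otimes>\<^bsub>G\<^esub> x = \<one>\<^bsub>G\<^esub>"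
        using bij x G by (meson bij_betw_def group.is_monoid inj_onD monoid.m_closed monoid.one_closed)
      then show "y \<in> h ` two_torsion G" using x by (auto simp: two_torsion_def)
    qed
  qed
qed

lemma two_torsion_DirProd: "two_torsion (G \<times>\<times> H) = two_torsion G \<times> two_torsion H"
  by (auto simp: two_torsion_def)

lemma two_torsion_product_group:
  "two_torsion (product_group I G) = (\<Pi>\<^sub>E i\<in>I. two_torsion (G i))"
proof -
  have "(\<lambda>i\<in>I. x i \<otimes>\<^bsub>G i\<^esub> x i) = (\<lambda>i\<in>I. \<one>\<^bsub>G i\<^esub>) \<longleftrightarrow> (\<forall>i\<in>I. x i \<otimes>\<^bsub>G i\<^esub> x i = \<one>\<^bsub>G i\<^esub>)" for x
    by (metis (mono_tags, lifting) restrict_apply restrict_ext)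
  then show ?thesis by (auto simp: two_torsion_def PiE_iff) (meson extensional_arb)
qed

lemma two_torsion_integer_mod_group_even:
  assumes "k \<ge> 1"
  shows "two_torsion (integer_mod_group (2 * k)) = {0, int k}"
proof -
  have "x = 0 \<or> x = int k" if x: "0 \<le> x" "x < 2 * int k" "int k dvd x" for x
  proof -
    obtain q where q: "x = int k * q" using x(3) by blast
    have "0 \<le> q" "q < 2" using x q assms by (auto simp: zero_le_mult_iff)
    then show ?thesis using q by auto
  qed
  then show ?thesis using assms by (auto simp: two_torsion_def carrier_integer_mod_group)
qed

lemma (in group) two_torsion_odd_order:
  assumes "finite (carrier G)" "odd (order G)"
  shows "two_torsion G = {\<one>}"
proof -
  have "x = \<one>" if x: "x \<in> carrier G" "x \<otimes> x = \<one>" for x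
  proof -
    obtain m where m: "order G = Suc (2 * m)" using assms(2) oddE by fastforce
    have "x [^] (2 * m) = (x [^] (2::nat)) [^] m" using nat_pow_pow x(1) by simp
    also have "\<dots> = \<one>" using x by (simp add: numeral_2_eq_2)
    finally have "x [^] order G = x" using x(1) m by (simp add: nat_pow_Suc)
    then show ?thesis using pow_order_eq_1 assms(1) x(1) by simp
  qed
  then show ?thesis by (auto simp: two_torsion_def)
qed

lemma card_two_torsion_even_cyclic_product:
  assumes "finite I" and "\<forall>j\<in>I. k j \<ge> 1"
    and "group H" and "finite (carrier H)" and "odd (order H)"
  shows "card (two_torsion (product_group I (\<lambda>j. integer_mod_group (2 * k j)) \<times>\<times> H)) = 2 ^ card I"
proof -
  have "two_torsion (product_group I (\<lambda>j. integer_mod_group (2 * k j)) \<times>\<times> H)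
      = (\<Pi>\<^sub>E j\<in>I. {0, int (k j)}) \<times> {\<one>\<^bsub>H\<^esub>}"
    using assms by (simp add: two_torsion_DirProd two_torsion_product_group
        two_torsion_integer_mod_group_even group.two_torsion_odd_order cong: PiE_cong)
  moreover have "card {0, int (k j)} = 2" if "j \<in> I" for j using assms(2) that by auto
  ultimately show ?thesis using assms(1) by (simp add: card_cartesian_product card_PiE)
qed

lemma kmul_cancel_left: "kmul u (kmul u v) = v"
  by (cases u; cases v) auto

lemma kmul_self: "kmul u u = K1"
  by (cases u) auto

lemma kmul_commute: "kmul u v = kmul v u"
  by (cases u; cases v) auto

lemma UNIV_klein: "(UNIV :: klein set) = {K1, Ka, Kb, Kc}"
  using klein.exhaust by blast

instance klein :: finite
  by standard (simp add: UNIV_klein)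

lemma is_subloopD:
  assumes "is_subloop M H"
  shows "H \<subseteq> Lcarrier M" "Lone M \<in> H" "\<And>p q. p \<in> H \<Longrightarrow> q \<in> H \<Longrightarrow> Lmul M p q \<in> H"
  using assms by (simp_all add: is_subloop_def)

lemma is_subloop_klein_image:
  assumes bij: "bij_betw f UNIV H" and hom: "\<And>u v. f (kmul u v) = Lmul M (f u) (f v)"
    and sub: "H \<subseteq> Lcarrier M" and one: "f K1 = Lone M"
  shows "is_subloop M H"
proof -
  have H: "H = range f" and inj: "inj f" using bij by (simp_all add: bij_betw_def)
  have divide: "\<exists>!x. x \<in> H \<and> Lmul M p x = q" "\<exists>!y. y \<in> H \<and> Lmul M y p = q"
    if pq: "p \<in> H" "q \<in> H" for p q
  proof -
    obtain u v where uv: "p = f u" "q = f v" using pq H by auto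
    have "w = kmul u v" if "kmul u w = v \<or> kmul w u = v" for w
      using that kmul_cancel_left[of u w] by (auto simp: kmul_commute)
    then have unique: "w = kmul u v" if "f (kmul u w) = f v \<or> f (kmul w u) = f v" for w
      using that inj by (auto dest: injD)
    show "\<exists>!x. x \<in> H \<and> Lmul M p x = q" "\<exists>!y. y \<in> H \<and> Lmul M y p = q"
      using unique uv H by (auto simp: hom[symmetric] kmul_cancel_left kmul_commute[of _ u]
          intro!: ex1I[of _ "f (kmul u v)"])
  qed
  show ?thesis unfolding is_subloop_def
    using sub divide H one by (auto simp: hom[symmetric] intro: range_eqI[of _ _ K1])
qed

definition klein_quad :: "('a, 'b) monoid_scheme \<Rightarrow> 'a \<Rightarrow> 'a \<Rightarrow> (klein \<times> 'a) set" where
  "klein_quad M x y = {(K1, \<one>\<^bsub>M\<^esub>), (Ka, x), (Kb, y), (Kc, x \<otimes>\<^bsub>M\<^esub> y)}"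

lemma klein_quad_inj: "inj_on (\<lambda>(x, y). klein_quad M x y) A"
proof (rule inj_onI, clarify)
  fix x y x' y' assume "klein_quad M x y = klein_quad M x' y'"
  moreover have "(Ka, x) \<in> klein_quad M x y" "(Kb, y) \<in> klein_quad M x y"
    by (simp_all add: klein_quad_def)
  ultimately have "(Ka, x) \<in> klein_quad M x' y'" "(Kb, y) \<in> klein_quad M x' y'" by simp_all
  then show "x = x' \<and> y = y'" by (simp add: klein_quad_def)
qed

lemma (in comm_group) klein_quad_in_calH:
  assumes x: "x \<in> two_torsion G" and y: "y \<in> two_torsion G"
  shows "klein_quad G x y \<in> calH G"
proof -
  have xc: "x \<in> carrier G" and xx: "x \<otimes> x = \<one>" using x by (auto simp: two_torsion_def)
  have yc: "y \<in> carrier G" and yy: "y \<otimes> y = \<one>" using y by (auto simp: two_torsion_def)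
  have inv_x: "inv x = x" using inv_equality[OF xx xc xc] .
  have inv_y: "inv y = y" using inv_equality[OF yy yc yc] .
  have inv_xy: "inv (x \<otimes> y) = x \<otimes> y" using inv_x inv_y xc yc inv_mult by simp
  have products: "x \<otimes> (x \<otimes> y) = y" "y \<otimes> (x \<otimes> y) = x" "x \<otimes> y \<otimes> x = y" "x \<otimes> y \<otimes> y = x"
    "x \<otimes> y \<otimes> (x \<otimes> y) = \<one>" "y \<otimes> x = x \<otimes> y"
    using xc yc xx yy by (simp_all add: m_assoc[symmetric] m_comm[of y x])
      (simp_all add: m_assoc m_lcomm[of y x] m_lcomm[of x y])
  define f where
    "f u = (case u of K1 \<Rightarrow> (K1, \<one>) | Ka \<Rightarrow> (Ka, x) | Kb \<Rightarrow> (Kb, y) | Kc \<Rightarrow> (Kc, x \<otimes> y))" for u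
  have hom: "f (kmul u v) = Lmul G (f u) (f v)" for u v
    by (cases u; cases v) (simp_all add: f_def Lmul_def inv_x inv_y inv_xy xx yy products xc yc)
  have bij: "bij_betw f UNIV (klein_quad G x y)"
  proof (rule bij_betw_imageI)
    show "inj f" by (rule inj_on_inverseI[of _ fst]) (simp add: f_def split: klein.split)
  qed (auto simp: UNIV_klein f_def klein_quad_def)
  have "klein_quad G x y \<subseteq> Lcarrier G"
    using xc yc by (auto simp: klein_quad_def Lcarrier_def)
  moreover have "f K1 = Lone G" by (simp add: f_def Lone_def)
  ultimately have "is_subloop G (klein_quad G x y)"
    using is_subloop_klein_image[OF bij hom] by blast
  moreover have "klein_quad G x y \<inter> ({K1} \<times> carrier G) = {(K1, \<one>)}"
    by (auto simp: klein_quad_def)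
  ultimately show ?thesis
    using bij hom by (auto simp: calH_def iso_to_klein_def)
qed

lemma (in group) inj_on_fst_subloop:
  assumes sub: "is_subloop G H" and one: "H \<inter> ({K1} \<times> carrier G) = {(K1, \<one>)}"
  shows "inj_on fst H"
proof (rule inj_onI)
  fix p q assume p: "p \<in> H" and q: "q \<in> H" and e: "fst p = fst q"
  obtain k u v where pq: "p = (k, u)" "q = (k, v)" using e by (cases p; cases q) auto
  have uv: "u \<in> carrier G" "v \<in> carrier G"
    using is_subloopD(1)[OF sub] p q pq by (auto simp: Lcarrier_def)
  show "p = q"
  proof (cases "k = K1")
    case True
    then have "u = \<one>" "v = \<one>" using p q pq uv one by blast+
    then show ?thesis using pq by simp
  next
    case False
    then have "Lmul G p q = (K1, inv u \<otimes> v)" using pq by (simp add: Lmul_def kmul_self)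
    moreover have "Lmul G p q \<in> H" using is_subloopD(3)[OF sub p q] .
    ultimately have "(K1, inv u \<otimes> v) \<in> H \<inter> ({K1} \<times> carrier G)" using uv by simp
    then have "inv u \<otimes> v = \<one>" by (simp add: one)
    then have "inv u \<otimes> v = inv u \<otimes> u" using uv by (simp only: l_inv)
    then have "v = u" by (rule l_cancel[OF _ uv(2) uv(1) inv_closed[OF uv(1)]])
    then show ?thesis using pq by simp
  qed
qed

lemma (in group) calH_graph:
  assumes "H \<in> calH G"
  obtains x y z where "x \<in> carrier G" "y \<in> carrier G" "z \<in> carrier G"
    and "H = {(K1, \<one>), (Ka, x), (Kb, y), (Kc, z)}" and "is_subloop G H"
proof -
  have sub: "is_subloop G H" and klein: "iso_to_klein G H"
    and c1: "card (H \<inter> ({K1} \<times> carrier G)) = 1"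
    using assms unfolding calH_def by blast+
  obtain f where "bij_betw f (UNIV :: klein set) H" using klein unfolding iso_to_klein_def by blast
  then have card_H: "card H = card (UNIV :: klein set)" by (rule bij_betw_same_card[symmetric])
  have "Lone G \<in> H" "H \<subseteq> Lcarrier G" using is_subloopD[OF sub] by simp_all
  then have oneH: "(K1, \<one>) \<in> H" and H_carrier: "H \<subseteq> UNIV \<times> carrier G"
    by (simp_all add: Lone_def Lcarrier_def)
  obtain e where "H \<inter> ({K1} \<times> carrier G) = {e}" using c1 by (rule card_1_singletonE)
  moreover have "(K1, \<one>) \<in> H \<inter> ({K1} \<times> carrier G)" using oneH one_closed by blast
  ultimately have "H \<inter> ({K1} \<times> carrier G) = {(K1, \<one>)}" by simp
  with sub have inj: "inj_on fst H" by (rule inj_on_fst_subloop)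
  then have "card (fst ` H) = card (UNIV :: klein set)" using card_H by (simp add: card_image)
  then have "fst ` H = UNIV" by (rule card_subset_eq[OF finite_UNIV subset_UNIV])
  then have "\<exists>w. (k, w) \<in> H" for k by (metis UNIV_I imageE prod.collapse)
  then obtain x y z where xyz: "(Ka, x) \<in> H" "(Kb, y) \<in> H" "(Kc, z) \<in> H" by blast
  have "p \<in> {(K1, \<one>), (Ka, x), (Kb, y), (Kc, z)}" if p: "p \<in> H" for p
  proof (cases "fst p")
    case K1 then show ?thesis using inj_onD[OF inj _ p oneH] by simp
  next
    case Ka then show ?thesis using inj_onD[OF inj _ p xyz(1)] by simp
  next
    case Kb then show ?thesis using inj_onD[OF inj _ p xyz(2)] by simp
  next
    case Kc then show ?thesis using inj_onD[OF inj _ p xyz(3)] by simp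
  qed
  then have "H = {(K1, \<one>), (Ka, x), (Kb, y), (Kc, z)}" using oneH xyz by blast
  moreover have "x \<in> carrier G" "y \<in> carrier G" "z \<in> carrier G" using xyz H_carrier by auto
  ultimately show ?thesis using that sub by blast
qed

lemma (in comm_group) calH_klein_quad:
  assumes "H \<in> calH G"
  obtains x y where "x \<in> two_torsion G" "y \<in> two_torsion G" "H = klein_quad G x y"
proof -
  obtain x y z where xyz: "x \<in> carrier G" "y \<in> carrier G" "z \<in> carrier G"
    and H: "H = {(K1, \<one>), (Ka, x), (Kb, y), (Kc, z)}"
    and sub: "is_subloop G H"
    using calH_graph[OF assms] by blast
  have "Lmul G (Ka, x) (Kb, y) \<in> H" "Lmul G (Kb, y) (Kc, z) \<in> H" "Lmul G (Kb, y) (Ka, x) \<in> H"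
    using is_subloopD(3)[OF sub] H by blast+
  then have z1: "z = inv x \<otimes> y" and x1: "x = inv y \<otimes> z" and z2: "z = inv y \<otimes> x"
    by (auto simp: H Lmul_def)
  have "x = inv y \<otimes> (inv x \<otimes> y)" using z1 x1 by simp
  also have "\<dots> = inv x" using xyz by (simp add: m_lcomm[of "inv y" "inv x" y])
  finally have xx: "x \<otimes> x = \<one>" using xyz by (metis r_inv)
  then have "inv x = x" using xyz by (simp add: inv_equality)
  then have z: "z = x \<otimes> y" using z1 by simp
  then have "inv y = y" using z2 xyz by (metis m_comm inv_closed r_cancel)
  then have "y \<otimes> y = \<one>" using xyz by (metis r_inv)
  then show ?thesis
    using that xx xyz z H by (auto simp: two_torsion_def klein_quad_def)
qed

lemma (in comm_group) card_calH: "card (calH G) = card (two_torsion G) ^ 2"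
proof -
  have "calH G = (\<lambda>(x, y). klein_quad G x y) ` (two_torsion G \<times> two_torsion G)"
    by (auto intro: klein_quad_in_calH elim!: calH_klein_quad)
  then show ?thesis
    by (simp add: card_image[OF klein_quad_inj] card_cartesian_product power2_eq_square)
qed

theorem corollary4p6:
  fixes M :: "'a monoid" and M1 :: "'b monoid" and s :: nat and i :: "nat \<Rightarrow> nat"
  assumes "comm_group M" and "finite (carrier M)"
    and "even (order M)" and "grp_exponent M > 2"
    and "comm_group M1" and "finite (carrier M1)" and "odd (order M1)"
    and "s \<ge> 1" and "\<forall>j<s. i j \<ge> 1"
    and "M \<cong> DirProd (product_group {..<s} (\<lambda>j. integer_mod_group (2 * i j))) M1"
  shows "card (calH M) = 4 ^ s"
proof -
  let ?P = "DirProd (product_group {..<s} (\<lambda>j. integer_mod_group (2 * i j))) M1"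
  obtain h where h: "h \<in> iso M ?P" using assms(10) unfolding is_iso_def by blast
  have "group M" "group M1" using assms(1,5) comm_group.axioms(2) by blast+
  moreover have "group ?P" using \<open>group M1\<close> by (intro DirProd_group product_group) simp
  ultimately have "card (two_torsion M) = card (two_torsion ?P)"
    using two_torsion_iso[OF h] bij_betw_same_card by blast
  also have "\<dots> = 2 ^ s"
    using card_two_torsion_even_cyclic_product[of "{..<s}" i M1] assms(6,7,9) \<open>group M1\<close> by simp
  finally have "card (two_torsion M) = 2 ^ s" .
  then show ?thesis
    using comm_group.card_calH[OF assms(1)] by (simp add: power2_eq_square flip: power_mult_distrib)
qed

end
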